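(* Let $w_k^A,w_k^B$ be the noise vectors associated with SDQ (see context), under the assumptions that rewards satisfy $|r(s,a,s')|\le1$, $\|Q_0^A\|_\infty,\|Q_0^B\|_\infty\le1$, $d(s,a)>0$ for all $(s,a)$, and constant $\alpha\in(0,1)$. Let $Q_k^{\mathrm{err}_{UL}}$ be defined by \[ Q_{k+1}^{\mathrm{err}_{UL}}=(I+\alpha\gamma DP\Pi_{Q^*}-\alpha D)Q_k^{\mathrm{err}_{UL}}+\alpha w_k^A-\alpha w_k^B \] from a deterministic initial vector $Q_0^{\mathrm{err}_{UL}}\in\mathbb{R}^{|\mathcal{S}||\mathcal{A}|}$. With $d_{\min}=\min_{(s,a)}d(s,a)$ and $\rho=1-\alpha d_{\min}(1-\gamma)$, for every $k\ge0$, \[ \mathbb{E}\big[\|Q_k^{\mathrm{err}_{UL}}\|_2\big]\le\frac{4\alpha^{1/2}|\mathcal{S}\times\mathcal{A}|}{d_{\min}^{1/2}(1-\gamma)^{3/2}}+|\mathcal{S}\times\mathcal{A}|\,\|Q_0^{\mathrm{err}_{UL}}\|_2\,\rho^k. \]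
   Context: Finite MDP with states $\mathcal{S}=\{1,\dots,|\mathcal{S}|\}$, actions $\mathcal{A}=\{1,\dots,|\mathcal{A}|\}$, transitions $P(s'|s,a)$, deterministic reward $r(s,a,s')$ with $|r|\le1$, discount $\gamma\in(0,1)$, optimal action-value function $Q^*$; the MDP is assumed ergodic. Sampling distribution $d(s,a)>0$; at iteration $k$, $(s_k,a_k)\sim d$ i.i.d., $s_k'\sim P(\cdot|s_k,a_k)$, $r_{k+1}=r(s_k,a_k,s_k')$. SDQ: only entry $(s_k,a_k)$ is updated, $Q_{k+1}^A(s_k,a_k)=Q_k^A(s_k,a_k)+\alpha\{r_{k+1}+\gamma Q_k^A(s_k',\arg\max_aQ_k^B(s_k',a))-Q_k^A(s_k,a_k)\}$ and symmetrically for $B$ with roles of $A,B$ swapped. Vector notation: $Q\in\mathbb{R}^{|\mathcal{S}||\mathcal{A}|}$ stacks $Q(\cdot,1),\dots,Q(\cdot,|\mathcal{A}|)$, so $Q(s,a)=(e_a\otimes e_s)^TQ$. $D$ is the diagonal matrix with entry $d(s,a)$ at position $(s,a)$. $P\in\mathbb{R}^{|\mathcal{S}||\mathcal{A}|\times|\mathcal{S}|}$ has row $(s,a)$ equal to $P(\cdot|s,a)$. $R(s,a)=\mathbb{E}[r(s,a,s')|s,a]$. For $Q$, $\pi_Q(s)=\arg\max_aQ(s,a)$ (fixed tie-breaking) and $\Pi_Q\in\mathbb{R}^{|\mathcal{S}|\times|\mathcal{S}||\mathcal{A}|}$ has $s$-th row $e_{\pi_Q(s)}^T\otimes e_s^T$.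 Noise: $w_k^A=(e_{a_k}\otimes e_{s_k})r_{k+1}+\gamma(e_{a_k}\otimes e_{s_k})e_{s_k'}^T\Pi_{Q_k^B}Q_k^A-(e_{a_k}\otimes e_{s_k})(e_{a_k}\otimes e_{s_k})^TQ_k^A-(DR+\gamma DP\Pi_{Q_k^B}Q_k^A-DQ_k^A)$, and $w_k^B$ is the same with $A$ and $B$ swapped. $|\mathcal{S}\times\mathcal{A}|=|\mathcal{S}||\mathcal{A}|$. *)

theory Defs
  imports "HOL-Probability.Probability"
begin

text \<open>Action-value functions are functions on state-action pairs (the paper's vectors
  in R^{|S||A|}).\<close>

type_synonym ('s, 'act) qfun = "'s \<times> 'act \<Rightarrow> real"

definition greedy :: "('s, 'act::{finite,linorder}) qfun \<Rightarrow> 's \<Rightarrow> 'act" where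
  "greedy Q s = (LEAST a. \<forall>b. Q (s, b) \<le> Q (s, a))"

definition expR :: "('s::finite \<Rightarrow> 'act \<Rightarrow> 's pmf) \<Rightarrow> ('s \<Rightarrow> 'act \<Rightarrow> 's \<Rightarrow> real) \<Rightarrow> 's \<Rightarrow> 'act \<Rightarrow> real" where
  "expR P r s a = (\<Sum>s'\<in>UNIV. pmf (P s a) s' * r s a s')"

definition bellman_opt ::
  "('s::finite \<Rightarrow> 'act::finite \<Rightarrow> 's pmf) \<Rightarrow> ('s \<Rightarrow> 'act \<Rightarrow> 's \<Rightarrow> real) \<Rightarrow> real
    \<Rightarrow> ('s, 'act) qfun \<Rightarrow> ('s, 'act) qfun" where
  "bellman_opt P r \<gamma> Q = (\<lambda>(s, a). expR P r s a
      + \<gamma> * (\<Sum>s'\<in>UNIV. pmf (P s a) s' * Max (range (\<lambda>b. Q (s', b)))))"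

definition Qstar ::
  "('s::finite \<Rightarrow> 'act::finite \<Rightarrow> 's pmf) \<Rightarrow> ('s \<Rightarrow> 'act \<Rightarrow> 's \<Rightarrow> real) \<Rightarrow> real \<Rightarrow> ('s, 'act) qfun" where
  "Qstar P r \<gamma> = (THE Q. bellman_opt P r \<gamma> Q = Q)"

fun trans_pow :: "('s::finite \<Rightarrow> 'act \<Rightarrow> 's pmf) \<Rightarrow> ('s \<Rightarrow> 'act) \<Rightarrow> nat \<Rightarrow> 's \<Rightarrow> 's \<Rightarrow> real" where
  "trans_pow P \<pi> 0 s s' = (if s = s' then 1 else 0)"
| "trans_pow P \<pi> (Suc n) s s' = (\<Sum>t\<in>UNIV. pmf (P s (\<pi> s)) t * trans_pow P \<pi> n t s')"

definition ergodic :: "('s::finite \<Rightarrow> 'act \<Rightarrow> 's pmf) \<Rightarrow> bool" where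
  "ergodic P = (\<forall>\<pi> s s'. \<exists>n. trans_pow P \<pi> n s s' > 0)"

definition sample_pmf :: "('s \<times> 'act) pmf \<Rightarrow> ('s \<Rightarrow> 'act \<Rightarrow> 's pmf) \<Rightarrow> ('s \<times> 'act \<times> 's) pmf" where
  "sample_pmf d P = bind_pmf d (\<lambda>(s, a). map_pmf (\<lambda>s'. (s, a, s')) (P s a))"

definition sdq_step ::
  "real \<Rightarrow> real \<Rightarrow> ('s \<Rightarrow> 'act \<Rightarrow> 's \<Rightarrow> real) \<Rightarrow> ('s, 'act::{finite,linorder}) qfun \<times> ('s, 'act) qfun
    \<Rightarrow> 's \<times> 'act \<times> 's \<Rightarrow> ('s, 'act) qfun \<times> ('s, 'act) qfun" where
  "sdq_step \<alpha> \<gamma> r QQ smp = (case QQ of (QA, QB) \<Rightarrow> case smp of (s, a, s') \<Rightarrow>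
     (QA((s, a) := QA (s, a) + \<alpha> * (r s a s' + \<gamma> * QA (s', greedy QB s') - QA (s, a))),
      QB((s, a) := QB (s, a) + \<alpha> * (r s a s' + \<gamma> * QB (s', greedy QA s') - QB (s, a)))))"

fun sdq ::
  "real \<Rightarrow> real \<Rightarrow> ('s \<Rightarrow> 'act \<Rightarrow> 's \<Rightarrow> real) \<Rightarrow> ('s, 'act::{finite,linorder}) qfun \<Rightarrow> ('s, 'act) qfun
    \<Rightarrow> nat \<Rightarrow> ('s \<times> 'act \<times> 's) stream \<Rightarrow> ('s, 'act) qfun \<times> ('s, 'act) qfun" where
  "sdq \<alpha> \<gamma> r QA0 QB0 0 \<omega> = (QA0, QB0)"
| "sdq \<alpha> \<gamma> r QA0 QB0 (Suc k) \<omega> = sdq_step \<alpha> \<gamma> r (sdq \<alpha> \<gamma> r QA0 QB0 k \<omega>) (\<omega> !! k)"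

text \<open>Noise vector w^A for current iterates QA, QB and sample (s,a,s');
  w^B is obtained by swapping QA and QB.\<close>
definition noise ::
  "('s::finite \<Rightarrow> 'act::{finite,linorder} \<Rightarrow> 's pmf) \<Rightarrow> ('s \<Rightarrow> 'act \<Rightarrow> 's \<Rightarrow> real) \<Rightarrow> real
    \<Rightarrow> ('s \<times> 'act) pmf \<Rightarrow> ('s, 'act) qfun \<Rightarrow> ('s, 'act) qfun \<Rightarrow> 's \<times> 'act \<times> 's \<Rightarrow> ('s, 'act) qfun" where
  "noise P r \<gamma> d QA QB smp = (case smp of (s, a, s') \<Rightarrow> (\<lambda>(x, y).
      (if (x, y) = (s, a) then r s a s' + \<gamma> * QA (s', greedy QB s') - QA (s, a) else 0)
      - pmf d (x, y) * (expR P r x y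
          + \<gamma> * (\<Sum>t\<in>UNIV. pmf (P x y) t * QA (t, greedy QB t)) - QA (x, y))))"

fun err_UL ::
  "('s::finite \<Rightarrow> 'act::{finite,linorder} \<Rightarrow> 's pmf) \<Rightarrow> ('s \<Rightarrow> 'act \<Rightarrow> 's \<Rightarrow> real) \<Rightarrow> real
    \<Rightarrow> ('s \<times> 'act) pmf \<Rightarrow> real \<Rightarrow> ('s, 'act) qfun \<Rightarrow> ('s, 'act) qfun \<Rightarrow> ('s, 'act) qfun
    \<Rightarrow> nat \<Rightarrow> ('s \<times> 'act \<times> 's) stream \<Rightarrow> ('s, 'act) qfun" where
  "err_UL P r \<gamma> d \<alpha> QA0 QB0 E0 0 \<omega> = E0"
| "err_UL P r \<gamma> d \<alpha> QA0 QB0 E0 (Suc k) \<omega> =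
     (let E = err_UL P r \<gamma> d \<alpha> QA0 QB0 E0 k \<omega>;
          QA = fst (sdq \<alpha> \<gamma> r QA0 QB0 k \<omega>);
          QB = snd (sdq \<alpha> \<gamma> r QA0 QB0 k \<omega>);
          wA = noise P r \<gamma> d QA QB (\<omega> !! k);
          wB = noise P r \<gamma> d QB QA (\<omega> !! k);
          \<pi> = greedy (Qstar P r \<gamma>)
      in (\<lambda>(x, y). E (x, y)
            + \<alpha> * \<gamma> * pmf d (x, y) * (\<Sum>t\<in>UNIV. pmf (P x y) t * E (t, \<pi> t))
            - \<alpha> * pmf d (x, y) * E (x, y)
            + \<alpha> * wA (x, y) - \<alpha> * wB (x, y)))"

definition l2norm :: "('a::finite \<Rightarrow> real) \<Rightarrow> real" where
  "l2norm v = sqrt (\<Sum>x\<in>UNIV. (v x)\<^sup>2)"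

end

theory Submission
  imports Defs
begin

text \<open>Unrolling the recursion gives
  Q_k = T^k Q_0 + \<alpha> \<Sum>_{i<k} T^{k-1-i} (w_i^A - w_i^B) with T = I + \<alpha>\<gamma>DP\<Pi>_{Q*} - \<alpha>D.
  Every row of T is nonnegative and sums to at most \<rho>, so T^m maps vectors of sup norm c to
  vectors of sup norm at most \<rho>^m c; this gives the deterministic term. Given the samples before
  step i, the noise w_i^A - w_i^B has mean zero, so the noise terms are martingale increments and
  the second moment of their sum is the sum of their second moments. The SDQ iterates stay in
  [-1/(1-\<gamma>), 1/(1-\<gamma>)], hence every entry of the i-th increment has second moment at most
  \<rho>^{2(k-1-i)} (4/(1-\<gamma>))^2. Summing over the entries and the geometric series and applying
  Jensen's inequality gives the \<alpha>^{1/2} term.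
  Expectations over the sample stream only involve the first k samples and are computed as
  finite sums.\<close>

lemma l2norm_eq_L2_set: "l2norm v = L2_set v UNIV"
  by (simp add: l2norm_def L2_set_def)

lemma l2norm_nonneg: "0 \<le> l2norm v"
  by (simp add: l2norm_eq_L2_set)

lemma power2_l2norm: "(l2norm v)\<^sup>2 = (\<Sum>x\<in>UNIV. (v x)\<^sup>2)"
  by (simp add: l2norm_def sum_nonneg)

lemma abs_le_l2norm: "\<bar>v q\<bar> \<le> l2norm v"
  unfolding l2norm_def
  by (rule real_le_rsqrt) (use member_le_sum[of q UNIV "\<lambda>x. (v x)\<^sup>2"] in simp)

lemma l2norm_add_scale_le:
  "0 \<le> c \<Longrightarrow> l2norm (\<lambda>p. u p + c * v p) \<le> l2norm u + c * l2norm v"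
  using L2_set_triangle_ineq[of u "\<lambda>p. c * v p" UNIV] L2_set_right_distrib[of c v UNIV]
  by (simp add: l2norm_eq_L2_set)

lemma l2norm_le_sqrt_card:
  fixes v :: "'a::finite \<Rightarrow> real"
  assumes "\<And>q. \<bar>v q\<bar> \<le> c"
  shows "l2norm v \<le> sqrt (real CARD('a)) * c"
proof -
  have "l2norm v = L2_set (\<lambda>q. \<bar>v q\<bar>) UNIV"
    by (simp add: l2norm_def L2_set_def)
  also have "\<dots> \<le> L2_set (\<lambda>_::'a. c) UNIV"
    by (rule L2_set_mono) (simp_all add: assms)
  also have "\<dots> = sqrt (real CARD('a)) * c"
    using assms[of undefined] by (simp add: L2_set_constant)
  finally show ?thesis .
qed

section \<open>Expectation over finitely many i.i.d. samples\<close>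

lemma sum_pmf_UNIV: "(\<Sum>x\<in>UNIV. pmf M x) = (1::real)" for M :: "'a::finite pmf"
  by (rule sum_pmf_eq_1) auto

text \<open>The last draw is integrated out first, so the inner sum is the conditional expectation
  given the earlier draws.\<close>
fun iid_expectation :: "'a::finite pmf \<Rightarrow> nat \<Rightarrow> ('a list \<Rightarrow> real) \<Rightarrow> real" where
  "iid_expectation M 0 F = F []"
| "iid_expectation M (Suc k) F = iid_expectation M k (\<lambda>xs. \<Sum>z\<in>UNIV. pmf M z * F (xs @ [z]))"

lemma iid_expectation_cong:
  "(\<And>xs. length xs = k \<Longrightarrow> F xs = G xs) \<Longrightarrow> iid_expectation M k F = iid_expectation M k G"
proof (induction k arbitrary: F G)
  case (Suc k)
  show ?case unfolding iid_expectation.simps by (rule Suc.IH) (simp add: Suc.prems)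
qed simp

lemma iid_expectation_add:
  "iid_expectation M k (\<lambda>xs. F xs + G xs) = iid_expectation M k F + iid_expectation M k G"
  by (induction k arbitrary: F G) (simp_all add: algebra_simps sum.distrib)

lemma iid_expectation_scale: "iid_expectation M k (\<lambda>xs. c * F xs) = c * iid_expectation M k F"
  by (induction k arbitrary: F) (simp_all add: mult.left_commute[of _ c] flip: sum_distrib_left)

lemma iid_expectation_zero: "iid_expectation M k (\<lambda>_. 0) = 0"
  by (induction k) simp_all

lemma iid_expectation_sum:
  "finite A \<Longrightarrow> iid_expectation M k (\<lambda>xs. \<Sum>i\<in>A. F i xs) = (\<Sum>i\<in>A. iid_expectation M k (F i))"
  by (induction A rule: finite_induct) (simp_all add: iid_expectation_add iid_expectation_zero)

lemma iid_expectation_const: "iid_expectation M k (\<lambda>_. c) = c"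
  by (induction k) (simp_all add: sum_distrib_right[symmetric] sum_pmf_UNIV)

lemma iid_expectation_mono:
  "(\<And>xs. length xs = k \<Longrightarrow> F xs \<le> G xs) \<Longrightarrow> iid_expectation M k F \<le> iid_expectation M k G"
proof (induction k arbitrary: F G)
  case (Suc k)
  show ?case unfolding iid_expectation.simps
    by (rule Suc.IH) (auto intro!: sum_mono mult_left_mono Suc.prems)
qed simp

lemma iid_expectation_nonneg: "(\<And>xs. 0 \<le> F xs) \<Longrightarrow> 0 \<le> iid_expectation M k F"
  using iid_expectation_mono[of k "\<lambda>_. 0" F M] by (simp add: iid_expectation_zero)

lemma iid_expectation_Suc_Cons:
  "iid_expectation M (Suc k) F = (\<Sum>z\<in>UNIV. pmf M z * iid_expectation M k (\<lambda>xs. F (z # xs)))"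
proof (induction k arbitrary: F)
  case (Suc k)
  have "iid_expectation M (Suc (Suc k)) F
      = iid_expectation M (Suc k) (\<lambda>xs. \<Sum>z\<in>UNIV. pmf M z * F (xs @ [z]))"
    by simp
  also have "\<dots> = (\<Sum>z\<in>UNIV. pmf M z * iid_expectation M (Suc k) (\<lambda>xs. F (z # xs)))"
    by (subst Suc.IH) simp
  finally show ?case .
qed simp

lemma iid_expectation_take:
  "m \<le> k \<Longrightarrow> iid_expectation M k (\<lambda>xs. H (take m xs)) = iid_expectation M m H"
proof (induction k)
  case (Suc k)
  show ?case
  proof (cases "m = Suc k")
    case True
    then show ?thesis
      using iid_expectation_cong[of "Suc k" "\<lambda>xs. H (take m xs)" H M] by simp
  next
    case False
    with Suc.prems have "m \<le> k" by simp
    have "iid_expectation M (Suc k) (\<lambda>xs. H (take m xs)) = iid_expectation M k (\<lambda>xs. H (take m xs))"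
      unfolding iid_expectation.simps
      by (rule iid_expectation_cong) (simp add: \<open>m \<le> k\<close> sum_distrib_right[symmetric] sum_pmf_UNIV)
    then show ?thesis using Suc.IH[OF \<open>m \<le> k\<close>] by simp
  qed
qed simp

lemma iid_expectation_prefix_le:
  assumes "i < k" and "\<And>ys. length ys = i \<Longrightarrow> (\<Sum>z\<in>UNIV. pmf M z * F (ys @ [z])) \<le> c"
  shows "iid_expectation M k (\<lambda>xs. F (take (Suc i) xs)) \<le> c"
proof -
  have "iid_expectation M k (\<lambda>xs. F (take (Suc i) xs)) = iid_expectation M (Suc i) F"
    using assms(1) by (simp add: iid_expectation_take)
  also have "\<dots> \<le> iid_expectation M i (\<lambda>_. c)"
    unfolding iid_expectation.simps by (rule iid_expectation_mono) (rule assms(2))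
  finally show ?thesis by (simp add: iid_expectation_const)
qed

lemma iid_expectation_le_sqrt_square:
  "iid_expectation M k f \<le> sqrt (iid_expectation M k (\<lambda>xs. (f xs)\<^sup>2))"
proof -
  define m where "m = iid_expectation M k f"
  have "0 \<le> iid_expectation M k (\<lambda>xs. (f xs - m)\<^sup>2)"
    by (rule iid_expectation_nonneg) simp
  also have "iid_expectation M k (\<lambda>xs. (f xs - m)\<^sup>2)
      = iid_expectation M k (\<lambda>xs. (f xs)\<^sup>2 + ((-2 * m) * f xs + m\<^sup>2))"
    by (simp add: power2_eq_square algebra_simps)
  also have "\<dots> = iid_expectation M k (\<lambda>xs. (f xs)\<^sup>2) - m\<^sup>2"
    unfolding iid_expectation_add iid_expectation_scale iid_expectation_const m_def
    by (simp add: power2_eq_square)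
  finally have "m\<^sup>2 \<le> iid_expectation M k (\<lambda>xs. (f xs)\<^sup>2)" by simp
  then show ?thesis unfolding m_def by (metis real_le_rsqrt)
qed

text \<open>The increment of step j is centred given the first j draws, which determine every
  earlier increment.\<close>
lemma iid_expectation_martingale_cross:
  assumes "i < j" "j < k" and "\<And>ys. length ys = j \<Longrightarrow> (\<Sum>z\<in>UNIV. pmf M z * g (ys @ [z])) = 0"
  shows "iid_expectation M k (\<lambda>xs. f (take (Suc i) xs) * g (take (Suc j) xs)) = 0"
proof -
  have "iid_expectation M k (\<lambda>xs. f (take (Suc i) xs) * g (take (Suc j) xs))
      = iid_expectation M (Suc j) (\<lambda>ys. f (take (Suc i) ys) * g ys)"
    using iid_expectation_take[of "Suc j" k M "\<lambda>ys. f (take (Suc i) ys) * g ys"] assms(1,2)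
    by (simp add: min_def)
  also have "\<dots> = iid_expectation M j (\<lambda>ys. f (take (Suc i) ys) * (\<Sum>z\<in>UNIV. pmf M z * g (ys @ [z])))"
    unfolding iid_expectation.simps
    by (rule iid_expectation_cong) (use assms(1) in \<open>simp add: sum_distrib_left mult.left_commute\<close>)
  also have "\<dots> = iid_expectation M j (\<lambda>_. 0)"
    by (rule iid_expectation_cong) (simp add: assms(3))
  finally show ?thesis by (simp add: iid_expectation_zero)
qed

lemma iid_expectation_square_sum_martingale:
  assumes "\<And>i ys. i < k \<Longrightarrow> length ys = i \<Longrightarrow> (\<Sum>z\<in>UNIV. pmf M z * g i (ys @ [z])) = 0"
  shows "iid_expectation M k (\<lambda>xs. (\<Sum>i<k. g i (take (Suc i) xs))\<^sup>2)
    = (\<Sum>i<k. iid_expectation M k (\<lambda>xs. (g i (take (Suc i) xs))\<^sup>2))"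
proof -
  have cross: "iid_expectation M k (\<lambda>xs. g i (take (Suc i) xs) * g j (take (Suc j) xs))
      = (if i = j then iid_expectation M k (\<lambda>xs. (g i (take (Suc i) xs))\<^sup>2) else 0)"
    if "i < k" "j < k" for i j
  proof (cases i j rule: linorder_cases)
    case less
    have "iid_expectation M k (\<lambda>xs. g i (take (Suc i) xs) * g j (take (Suc j) xs)) = 0"
      by (rule iid_expectation_martingale_cross[OF less \<open>j < k\<close>]) (rule assms[OF \<open>j < k\<close>])
    with less show ?thesis by simp
  next
    case equal
    then show ?thesis by (simp add: power2_eq_square)
  next
    case greater
    have "iid_expectation M k (\<lambda>xs. g j (take (Suc j) xs) * g i (take (Suc i) xs)) = 0"
      by (rule iid_expectation_martingale_cross[OF greater \<open>i < k\<close>]) (rule assms[OF \<open>i < k\<close>])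
    with greater show ?thesis by (simp add: mult.commute)
  qed
  have "iid_expectation M k (\<lambda>xs. (\<Sum>i<k. g i (take (Suc i) xs))\<^sup>2)
      = (\<Sum>i<k. \<Sum>j<k. iid_expectation M k (\<lambda>xs. g i (take (Suc i) xs) * g j (take (Suc j) xs)))"
    by (simp add: power2_eq_square sum_product iid_expectation_sum)
  also have "\<dots> = (\<Sum>i<k. iid_expectation M k (\<lambda>xs. (g i (take (Suc i) xs))\<^sup>2))"
    by (simp add: cross)
  finally show ?thesis .
qed

lemma borel_measurable_stake:
  fixes M :: "'a::countable pmf" and F :: "'a list \<Rightarrow> 'b::topological_space"
  shows "(\<lambda>\<omega>. F (stake k \<omega>)) \<in> borel_measurable (stream_space (measure_pmf M))"
proof -
  have sets_eq: "sets (stream_space (measure_pmf M)) = sets (stream_space (count_space UNIV))"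
    by (rule sets_stream_space_cong) simp
  have "stake k \<in> measurable (stream_space (measure_pmf M)) (count_space UNIV)"
    unfolding measurable_cong_sets[OF sets_eq refl] by (rule measurable_stake)
  then show ?thesis by (rule measurable_compose) (rule borel_measurable_count_space)
qed

lemma nn_integral_measure_pmf_finite_type:
  fixes M :: "'a::finite pmf"
  assumes "\<And>z. 0 \<le> g z"
  shows "(\<integral>\<^sup>+z. ennreal (g z) \<partial>measure_pmf M) = ennreal (\<Sum>z\<in>UNIV. pmf M z * g z)"
  using assms
  by (simp add: nn_integral_measure_pmf nn_integral_count_space_finite ennreal_mult flip: sum_ennreal)

lemma nn_integral_stream_space_stake:
  fixes M :: "'a::finite pmf"
  assumes "\<And>xs. 0 \<le> F xs"
  shows "(\<integral>\<^sup>+\<omega>. ennreal (F (stake k \<omega>)) \<partial>stream_space (measure_pmf M))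
    = ennreal (iid_expectation M k F)"
  using assms
proof (induction k arbitrary: F)
  case 0
  interpret prob_space "stream_space (measure_pmf M)"
    by (rule prob_space.prob_space_stream_space) (rule prob_space_measure_pmf)
  show ?case by (simp add: emeasure_space_1)
next
  case (Suc k)
  have "(\<integral>\<^sup>+\<omega>. ennreal (F (stake (Suc k) \<omega>)) \<partial>stream_space (measure_pmf M))
      = (\<integral>\<^sup>+z. (\<integral>\<^sup>+\<omega>. ennreal (F (stake (Suc k) (z ## \<omega>))) \<partial>stream_space (measure_pmf M))
          \<partial>measure_pmf M)"
    by (rule prob_space.nn_integral_stream_space[OF prob_space_measure_pmf borel_measurable_stake])
  also have "\<dots> = (\<integral>\<^sup>+z. ennreal (iid_expectation M k (\<lambda>xs. F (z # xs))) \<partial>measure_pmf M)"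
  proof (rule nn_integral_cong)
    fix z
    show "(\<integral>\<^sup>+\<omega>. ennreal (F (stake (Suc k) (z ## \<omega>))) \<partial>stream_space (measure_pmf M))
        = ennreal (iid_expectation M k (\<lambda>xs. F (z # xs)))"
      using Suc.IH[of "\<lambda>xs. F (z # xs)"] Suc.prems by simp
  qed
  also have "\<dots> = ennreal (iid_expectation M (Suc k) F)"
    unfolding iid_expectation_Suc_Cons using Suc.prems
    by (simp add: nn_integral_measure_pmf_finite_type iid_expectation_nonneg)
  finally show ?case .
qed

lemma integral_stream_space_stake:
  fixes M :: "'a::finite pmf"
  assumes "\<And>xs. 0 \<le> F xs"
  shows "(\<integral>\<omega>. F (stake k \<omega>) \<partial>stream_space (measure_pmf M)) = iid_expectation M k F"
  using assms
  by (simp add: integral_eq_nn_integral borel_measurable_stake nn_integral_stream_space_stake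
      iid_expectation_nonneg)

section \<open>The SDQ noise\<close>

lemma sum_pmf_centered_eq_0:
  "(\<Sum>z\<in>UNIV. pmf M z * (Y z - (\<Sum>z'\<in>UNIV. pmf M z' * Y z'))) = 0"
  for M :: "'a::finite pmf"
  by (simp add: right_diff_distrib sum_subtractf sum_distrib_right[symmetric] sum_pmf_UNIV)

lemma sum_pmf_centered_square_le:
  "(\<Sum>z\<in>UNIV. pmf M z * (Y z - (\<Sum>z'\<in>UNIV. pmf M z' * Y z'))\<^sup>2) \<le> (\<Sum>z\<in>UNIV. pmf M z * (Y z)\<^sup>2)"
  for M :: "'a::finite pmf"
proof -
  define e where "e = (\<Sum>z\<in>UNIV. pmf M z * Y z)"
  have "(\<Sum>z\<in>UNIV. pmf M z * (Y z - e)\<^sup>2)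
      = (\<Sum>z\<in>UNIV. pmf M z * (Y z)\<^sup>2) - 2 * e * (\<Sum>z\<in>UNIV. pmf M z * Y z) + e\<^sup>2 * (\<Sum>z\<in>UNIV. pmf M z)"
    by (simp add: power2_eq_square algebra_simps sum.distrib sum_subtractf sum_distrib_left)
  also have "\<dots> = (\<Sum>z\<in>UNIV. pmf M z * (Y z)\<^sup>2) - e\<^sup>2"
    by (simp add: e_def sum_pmf_UNIV power2_eq_square)
  finally show ?thesis unfolding e_def by simp
qed

lemma pmf_sample_pmf: "pmf (sample_pmf d P) (s, a, s') = pmf d (s, a) * pmf (P s a) s'"
  for P :: "'s::finite \<Rightarrow> 'act::finite \<Rightarrow> 's pmf"
proof -
  have inner: "pmf (case x of (s0, a0) \<Rightarrow> map_pmf (\<lambda>s''. (s0, a0, s'')) (P s0 a0)) (s, a, s')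
      = (if x = (s, a) then pmf (P s a) s' else 0)" for x
  proof (cases "x = (s, a)")
    case True
    have "inj (\<lambda>s''. (s, a, s''))" by (auto simp: inj_on_def)
    with True show ?thesis using pmf_map_inj'[of "\<lambda>s''. (s, a, s'')" "P s a" s'] by simp
  next
    case False
    then show ?thesis by (cases x) (auto intro!: pmf_map_outside)
  qed
  have "pmf (sample_pmf d P) (s, a, s') = (\<Sum>x\<in>UNIV. (if x = (s, a) then pmf (P s a) s' else 0) * pmf d x)"
    unfolding sample_pmf_def pmf_bind inner by (rule integral_measure_pmf_real) auto
  also have "\<dots> = pmf d (s, a) * pmf (P s a) s'"
    by (simp add: if_distrib[where f="\<lambda>u. u * _"] cong: if_cong)
  finally show ?thesis .
qed

lemma sum_UNIV_prod: "(\<Sum>z\<in>UNIV. g z) = (\<Sum>x\<in>UNIV. \<Sum>y\<in>UNIV. g (x, y))"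
  for g :: "'a::finite \<times> 'b::finite \<Rightarrow> 'c::comm_monoid_add"
  by (simp add: sum.cartesian_product)

lemma sum_sample_pmf:
  fixes P :: "'s::finite \<Rightarrow> 'act::finite \<Rightarrow> 's pmf"
  shows "(\<Sum>z\<in>UNIV. pmf (sample_pmf d P) z * f z)
    = (\<Sum>q\<in>UNIV. pmf d q * (\<Sum>s'\<in>UNIV. pmf (P (fst q) (snd q)) s' * f (fst q, snd q, s')))"
  unfolding sum_UNIV_prod pmf_sample_pmf by (simp add: sum_distrib_left mult.assoc)

definition td_sample ::
  "('s \<Rightarrow> 'act \<Rightarrow> 's \<Rightarrow> real) \<Rightarrow> real \<Rightarrow> ('s, 'act::{finite,linorder}) qfun \<Rightarrow> ('s, 'act) qfun
    \<Rightarrow> 's \<times> 'act \<times> 's \<Rightarrow> ('s, 'act) qfun" where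
  "td_sample r \<gamma> QA QB smp = (case smp of (s, a, s') \<Rightarrow>
     (\<lambda>q. if q = (s, a) then r s a s' + \<gamma> * QA (s', greedy QB s') - QA (s, a) else 0))"

lemma expectation_td_sample:
  fixes P :: "'s::finite \<Rightarrow> 'act::{finite,linorder} \<Rightarrow> 's pmf"
  shows "(\<Sum>z\<in>UNIV. pmf (sample_pmf d P) z * td_sample r \<gamma> QA QB z (x, y))
    = pmf d (x, y) * (expR P r x y + \<gamma> * (\<Sum>t\<in>UNIV. pmf (P x y) t * QA (t, greedy QB t)) - QA (x, y))"
proof -
  define h where "h s' = r x y s' + \<gamma> * QA (s', greedy QB s') - QA (x, y)" for s'
  have "(\<Sum>z\<in>UNIV. pmf (sample_pmf d P) z * td_sample r \<gamma> QA QB z (x, y))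
      = (\<Sum>q\<in>UNIV. if q = (x, y) then pmf d (x, y) * (\<Sum>s'\<in>UNIV. pmf (P x y) s' * h s') else 0)"
    unfolding sum_sample_pmf by (intro sum.cong refl) (auto simp: td_sample_def h_def prod_eq_iff)
  also have "\<dots> = pmf d (x, y) * (\<Sum>s'\<in>UNIV. pmf (P x y) s' * h s')"
    by simp
  also have "(\<Sum>s'\<in>UNIV. pmf (P x y) s' * h s')
      = expR P r x y + \<gamma> * (\<Sum>t\<in>UNIV. pmf (P x y) t * QA (t, greedy QB t)) - QA (x, y)"
  proof -
    have "(\<Sum>s'\<in>UNIV. QA (x, y) * pmf (P x y) s') = QA (x, y)"
      by (simp add: sum_distrib_left[symmetric] sum_pmf_UNIV)
    then show ?thesis
      by (simp add: h_def expR_def algebra_simps sum.distrib sum_subtractf sum_distrib_left)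
  qed
  finally show ?thesis .
qed

lemma noise_eq_centered:
  fixes P :: "'s::finite \<Rightarrow> 'act::{finite,linorder} \<Rightarrow> 's pmf"
  shows "noise P r \<gamma> d QA QB smp q
    = td_sample r \<gamma> QA QB smp q - (\<Sum>z\<in>UNIV. pmf (sample_pmf d P) z * td_sample r \<gamma> QA QB z q)"
  by (cases q) (simp only: expectation_td_sample, cases smp, simp add: noise_def td_sample_def)

definition noise_diff ::
  "('s::finite \<Rightarrow> 'act::{finite,linorder} \<Rightarrow> 's pmf) \<Rightarrow> ('s \<Rightarrow> 'act \<Rightarrow> 's \<Rightarrow> real) \<Rightarrow> real
    \<Rightarrow> ('s \<times> 'act) pmf \<Rightarrow> ('s, 'act) qfun \<times> ('s, 'act) qfun \<Rightarrow> 's \<times> 'act \<times> 's \<Rightarrow> ('s, 'act) qfun" where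
  "noise_diff P r \<gamma> d QQ smp =
     (\<lambda>q. noise P r \<gamma> d (fst QQ) (snd QQ) smp q - noise P r \<gamma> d (snd QQ) (fst QQ) smp q)"

lemma noise_diff_eq_centered:
  fixes P :: "'s::finite \<Rightarrow> 'act::{finite,linorder} \<Rightarrow> 's pmf"
  shows "noise_diff P r \<gamma> d (QA, QB) smp q
    = (td_sample r \<gamma> QA QB smp q - td_sample r \<gamma> QB QA smp q)
      - (\<Sum>z\<in>UNIV. pmf (sample_pmf d P) z * (td_sample r \<gamma> QA QB z q - td_sample r \<gamma> QB QA z q))"
  by (simp add: noise_diff_def noise_eq_centered right_diff_distrib sum_subtractf)

lemma expectation_noise_diff:
  fixes P :: "'s::finite \<Rightarrow> 'act::{finite,linorder} \<Rightarrow> 's pmf"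
  shows "(\<Sum>z\<in>UNIV. pmf (sample_pmf d P) z * noise_diff P r \<gamma> d QQ z q) = 0"
  by (cases QQ) (simp only: noise_diff_eq_centered sum_pmf_centered_eq_0)

text \<open>The rewards cancel in the difference.\<close>
lemma l2norm_td_sample_diff_le:
  assumes QA: "\<And>q. \<bar>QA q\<bar> \<le> B" and QB: "\<And>q. \<bar>QB q\<bar> \<le> B" and "0 \<le> \<gamma>" "\<gamma> \<le> 1"
  shows "l2norm (\<lambda>q. td_sample r \<gamma> QA QB z q - td_sample r \<gamma> QB QA z q) \<le> 4 * B"
proof -
  obtain s a s' where z: "z = (s, a, s')" by (cases z) auto
  define v where "v = \<gamma> * (QA (s', greedy QB s') - QB (s', greedy QA s')) - (QA (s, a) - QB (s, a))"
  have "l2norm (\<lambda>q. td_sample r \<gamma> QA QB z q - td_sample r \<gamma> QB QA z q)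
      = sqrt (\<Sum>q\<in>UNIV. if q = (s, a) then v\<^sup>2 else 0)"
    unfolding l2norm_def by (rule arg_cong[where f=sqrt], rule sum.cong) (auto simp: z td_sample_def v_def algebra_simps)
  also have "\<dots> = \<bar>v\<bar>" by simp
  also have "\<dots> \<le> \<gamma> * (2 * B) + 2 * B"
  proof -
    have "\<bar>QA (s', greedy QB s') - QB (s', greedy QA s')\<bar> \<le> 2 * B"
      using QA[of "(s', greedy QB s')"] QB[of "(s', greedy QA s')"] by linarith
    then have "\<bar>\<gamma> * (QA (s', greedy QB s') - QB (s', greedy QA s'))\<bar> \<le> \<gamma> * (2 * B)"
      using \<open>0 \<le> \<gamma>\<close> by (simp add: abs_mult mult_left_mono)
    moreover have "\<bar>QA (s, a) - QB (s, a)\<bar> \<le> 2 * B"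
      using QA[of "(s, a)"] QB[of "(s, a)"] by linarith
    ultimately show ?thesis unfolding v_def by linarith
  qed
  also have "\<dots> \<le> 4 * B"
  proof -
    have "0 \<le> B" using QA[of undefined] by linarith
    then show ?thesis using mult_right_mono[OF \<open>\<gamma> \<le> 1\<close>, of "2 * B"] by linarith
  qed
  finally show ?thesis .
qed

lemma second_moment_noise_diff_le:
  fixes P :: "'s::finite \<Rightarrow> 'act::{finite,linorder} \<Rightarrow> 's pmf"
  assumes "\<And>q. \<bar>QA q\<bar> \<le> B" "\<And>q. \<bar>QB q\<bar> \<le> B" "0 \<le> \<gamma>" "\<gamma> \<le> 1"
  shows "(\<Sum>z\<in>UNIV. pmf (sample_pmf d P) z * (l2norm (noise_diff P r \<gamma> d (QA, QB) z))\<^sup>2) \<le> (4 * B)\<^sup>2"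
proof -
  let ?w = "pmf (sample_pmf d P)"
  define Y where "Y = (\<lambda>z q. td_sample r \<gamma> QA QB z q - td_sample r \<gamma> QB QA z q)"
  have "(\<Sum>z\<in>UNIV. ?w z * (l2norm (noise_diff P r \<gamma> d (QA, QB) z))\<^sup>2)
      = (\<Sum>q\<in>UNIV. \<Sum>z\<in>UNIV. ?w z * (Y z q - (\<Sum>z'\<in>UNIV. ?w z' * Y z' q))\<^sup>2)"
    unfolding power2_l2norm noise_diff_eq_centered Y_def sum_distrib_left by (rule sum.swap)
  also have "\<dots> \<le> (\<Sum>q\<in>UNIV. \<Sum>z\<in>UNIV. ?w z * (Y z q)\<^sup>2)"
    by (intro sum_mono sum_pmf_centered_square_le)
  also have "\<dots> = (\<Sum>z\<in>UNIV. ?w z * (l2norm (Y z))\<^sup>2)"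
    unfolding power2_l2norm sum_distrib_left by (rule sum.swap)
  also have "\<dots> \<le> (\<Sum>z\<in>UNIV. ?w z * (4 * B)\<^sup>2)"
    unfolding Y_def using l2norm_td_sample_diff_le[OF assms]
    by (intro sum_mono mult_left_mono power_mono l2norm_nonneg) auto
  also have "\<dots> = (4 * B)\<^sup>2" by (simp add: sum_distrib_right[symmetric] sum_pmf_UNIV)
  finally show ?thesis .
qed

section \<open>Boundedness of the SDQ iterates\<close>

definition sdq_of_list ::
  "real \<Rightarrow> real \<Rightarrow> ('s \<Rightarrow> 'act \<Rightarrow> 's \<Rightarrow> real) \<Rightarrow> ('s, 'act::{finite,linorder}) qfun \<Rightarrow> ('s, 'act) qfun
    \<Rightarrow> ('s \<times> 'act \<times> 's) list \<Rightarrow> ('s, 'act) qfun \<times> ('s, 'act) qfun" where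
  "sdq_of_list \<alpha> \<gamma> r QA0 QB0 = foldl (sdq_step \<alpha> \<gamma> r) (QA0, QB0)"

lemma sdq_eq_sdq_of_list: "sdq \<alpha> \<gamma> r QA0 QB0 k \<omega> = sdq_of_list \<alpha> \<gamma> r QA0 QB0 (stake k \<omega>)"
  by (induction k) (simp_all add: sdq_of_list_def stake_Suc del: stake.simps(2))

lemma abs_td_update_le:
  fixes u v rr B \<alpha> \<gamma> :: real
  assumes "\<bar>u\<bar> \<le> B" "\<bar>v\<bar> \<le> B" "\<bar>rr\<bar> \<le> 1" "0 \<le> \<alpha>" "\<alpha> \<le> 1" "0 \<le> \<gamma>" "1 + \<gamma> * B \<le> B"
  shows "\<bar>u + \<alpha> * (rr + \<gamma> * v - u)\<bar> \<le> B"
proof -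
  have "\<bar>\<gamma> * v\<bar> \<le> \<gamma> * B"
    using assms(2,6) by (simp add: abs_mult mult_left_mono)
  then have "\<bar>rr + \<gamma> * v\<bar> \<le> B"
    using assms(3,7) abs_triangle_ineq[of rr "\<gamma> * v"] by linarith
  then have "\<bar>(1 - \<alpha>) * u + \<alpha> * (rr + \<gamma> * v)\<bar> \<le> (1 - \<alpha>) * B + \<alpha> * B"
    using assms(1,4,5) abs_triangle_ineq[of "(1 - \<alpha>) * u" "\<alpha> * (rr + \<gamma> * v)"]
      mult_left_mono[of "\<bar>u\<bar>" B "1 - \<alpha>"] mult_left_mono[of "\<bar>rr + \<gamma> * v\<bar>" B \<alpha>]
    by (simp add: abs_mult)
  then show ?thesis by (simp add: algebra_simps)
qed

lemma sdq_of_list_bounded: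
  assumes "\<And>q. \<bar>QA0 q\<bar> \<le> B" "\<And>q. \<bar>QB0 q\<bar> \<le> B" "\<And>s a s'. \<bar>r s a s'\<bar> \<le> 1"
    and "0 \<le> \<alpha>" "\<alpha> \<le> 1" "0 \<le> \<gamma>" "1 + \<gamma> * B \<le> B"
  shows "\<bar>fst (sdq_of_list \<alpha> \<gamma> r QA0 QB0 ys) q\<bar> \<le> B \<and> \<bar>snd (sdq_of_list \<alpha> \<gamma> r QA0 QB0 ys) q\<bar> \<le> B"
proof (induction ys arbitrary: q rule: rev_induct)
  case Nil
  then show ?case using assms(1,2) by (simp add: sdq_of_list_def)
next
  case (snoc z ys)
  obtain QA QB where QQ: "sdq_of_list \<alpha> \<gamma> r QA0 QB0 ys = (QA, QB)" by fastforce
  from snoc.IH have QA: "\<And>q. \<bar>QA q\<bar> \<le> B" and QB: "\<And>q. \<bar>QB q\<bar> \<le> B"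
    unfolding QQ by simp_all
  obtain s a s' where z: "z = (s, a, s')" by (cases z) auto
  show ?case
    using QQ abs_td_update_le[OF QA QA assms(3-7)] abs_td_update_le[OF QB QB assms(3-7)]
    by (simp add: sdq_of_list_def z sdq_step_def QA QB)
qed

section \<open>The expected update operator\<close>

text \<open>The matrix I + \<alpha>\<gamma>DP\<Pi>_\<pi> - \<alpha>D of the paper, for an arbitrary policy \<pi>.\<close>
definition update_op ::
  "('s::finite \<Rightarrow> 'act \<Rightarrow> 's pmf) \<Rightarrow> ('s \<times> 'act) pmf \<Rightarrow> real \<Rightarrow> real \<Rightarrow> ('s \<Rightarrow> 'act)
    \<Rightarrow> ('s, 'act) qfun \<Rightarrow> ('s, 'act) qfun" where
  "update_op P d \<alpha> \<gamma> \<pi> E = (\<lambda>(x, y). E (x, y)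
      + \<alpha> * \<gamma> * pmf d (x, y) * (\<Sum>t\<in>UNIV. pmf (P x y) t * E (t, \<pi> t))
      - \<alpha> * pmf d (x, y) * E (x, y))"

lemma update_op_zero: "update_op P d \<alpha> \<gamma> \<pi> (\<lambda>_. 0) p = 0"
  by (cases p) (simp add: update_op_def)

lemma update_op_add:
  "update_op P d \<alpha> \<gamma> \<pi> (\<lambda>q. u q + v q) p = update_op P d \<alpha> \<gamma> \<pi> u p + update_op P d \<alpha> \<gamma> \<pi> v p"
  by (cases p) (simp add: update_op_def algebra_simps sum.distrib)

lemma update_op_scale: "update_op P d \<alpha> \<gamma> \<pi> (\<lambda>q. c * v q) p = c * update_op P d \<alpha> \<gamma> \<pi> v p"
  by (cases p) (simp add: update_op_def algebra_simps sum_distrib_left)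

lemma update_op_sum:
  "update_op P d \<alpha> \<gamma> \<pi> (\<lambda>q. \<Sum>i\<in>A. g i q) p = (\<Sum>i\<in>A. update_op P d \<alpha> \<gamma> \<pi> (g i) p)"
  by (induction A rule: infinite_finite_induct) (simp_all add: update_op_zero update_op_add)

lemma update_op_pow_sum:
  "(update_op P d \<alpha> \<gamma> \<pi> ^^ m) (\<lambda>q. \<Sum>i\<in>A. g i q) p = (\<Sum>i\<in>A. (update_op P d \<alpha> \<gamma> \<pi> ^^ m) (g i) p)"
proof (induction m arbitrary: p)
  case (Suc m)
  have "(update_op P d \<alpha> \<gamma> \<pi> ^^ m) (\<lambda>q. \<Sum>i\<in>A. g i q) = (\<lambda>q. \<Sum>i\<in>A. (update_op P d \<alpha> \<gamma> \<pi> ^^ m) (g i) q)"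
    by (rule ext) (rule Suc.IH)
  then show ?case by (simp add: update_op_sum)
qed simp

lemma update_op_pow_scale:
  "(update_op P d \<alpha> \<gamma> \<pi> ^^ m) (\<lambda>q. c * v q) p = c * (update_op P d \<alpha> \<gamma> \<pi> ^^ m) v p"
proof (induction m arbitrary: p)
  case (Suc m)
  have "(update_op P d \<alpha> \<gamma> \<pi> ^^ m) (\<lambda>q. c * v q) = (\<lambda>q. c * (update_op P d \<alpha> \<gamma> \<pi> ^^ m) v q)"
    by (rule ext) (rule Suc.IH)
  then show ?case by (simp add: update_op_scale)
qed simp

lemma abs_update_op_le:
  assumes "0 \<le> \<gamma>" "\<gamma> \<le> 1" "0 \<le> \<alpha>" "\<alpha> \<le> 1" "\<And>q. dm \<le> pmf d q" "\<And>q. \<bar>v q\<bar> \<le> c"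
  shows "\<bar>update_op P d \<alpha> \<gamma> \<pi> v p\<bar> \<le> (1 - \<alpha> * dm * (1 - \<gamma>)) * c"
proof -
  obtain x y where p: "p = (x, y)" by fastforce
  define D where "D = pmf d (x, y)"
  define S where "S = (\<Sum>t\<in>UNIV. pmf (P x y) t * v (t, \<pi> t))"
  have "\<bar>S\<bar> \<le> (\<Sum>t\<in>UNIV. pmf (P x y) t * c)"
    unfolding S_def using assms(6)
    by (intro order_trans[OF sum_abs] sum_mono) (simp add: abs_mult mult_left_mono)
  then have S: "\<bar>S\<bar> \<le> c" by (simp add: sum_distrib_right[symmetric] sum_pmf_UNIV)
  have "\<alpha> * D \<le> 1" unfolding D_def using assms(3,4) by (intro mult_le_one) (simp_all add: pmf_le_1)
  then have "\<bar>(1 - \<alpha> * D) * v (x, y) + \<alpha> * \<gamma> * D * S\<bar> \<le> (1 - \<alpha> * D) * c + \<alpha> * \<gamma> * D * c"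
    using assms(1,3,6) S unfolding D_def
    by (intro order_trans[OF abs_triangle_ineq] add_mono) (auto simp: abs_mult intro!: mult_left_mono)
  also have "\<dots> = (1 - \<alpha> * D * (1 - \<gamma>)) * c" by (simp add: algebra_simps)
  also have "\<dots> \<le> (1 - \<alpha> * dm * (1 - \<gamma>)) * c"
    using assms S unfolding D_def
    by (intro mult_right_mono diff_left_mono mult_right_mono mult_left_mono) auto
  finally show ?thesis by (simp add: p update_op_def D_def S_def algebra_simps)
qed

lemma abs_update_op_pow_le:
  assumes "0 \<le> \<gamma>" "\<gamma> \<le> 1" "0 \<le> \<alpha>" "\<alpha> \<le> 1" "\<And>q. dm \<le> pmf d q" "\<And>q. \<bar>v q\<bar> \<le> c"
  shows "\<bar>(update_op P d \<alpha> \<gamma> \<pi> ^^ m) v p\<bar> \<le> (1 - \<alpha> * dm * (1 - \<gamma>)) ^ m * c"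
proof (induction m arbitrary: p)
  case (Suc m)
  show ?case using abs_update_op_le[OF assms(1-5) Suc.IH] by (simp add: mult.assoc)
qed (simp add: assms(6))

lemma power2_update_op_pow_le:
  assumes "0 \<le> \<gamma>" "\<gamma> \<le> 1" "0 \<le> \<alpha>" "\<alpha> \<le> 1" "\<And>q. dm \<le> pmf d q"
  shows "((update_op P d \<alpha> \<gamma> \<pi> ^^ m) v p)\<^sup>2 \<le> ((1 - \<alpha> * dm * (1 - \<gamma>))\<^sup>2) ^ m * (l2norm v)\<^sup>2"
proof -
  have "\<bar>(update_op P d \<alpha> \<gamma> \<pi> ^^ m) v p\<bar>\<^sup>2 \<le> ((1 - \<alpha> * dm * (1 - \<gamma>)) ^ m * l2norm v)\<^sup>2"
    using assms abs_le_l2norm by (intro power_mono abs_update_op_pow_le) auto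
  then show ?thesis by (simp add: power_mult_distrib power_mult[symmetric] mult.commute)
qed

lemma l2norm_update_op_pow_le:
  fixes P :: "'s::finite \<Rightarrow> 'act::finite \<Rightarrow> 's pmf"
  assumes "0 \<le> \<gamma>" "\<gamma> \<le> 1" "0 \<le> \<alpha>" "\<alpha> \<le> 1" "\<And>q. dm \<le> pmf d q"
  shows "l2norm ((update_op P d \<alpha> \<gamma> \<pi> ^^ m) v)
    \<le> sqrt CARD('s \<times> 'act) * ((1 - \<alpha> * dm * (1 - \<gamma>)) ^ m * l2norm v)"
  using assms abs_le_l2norm by (intro l2norm_le_sqrt_card abs_update_op_pow_le) auto

lemma expectation_update_op_pow_noise_diff:
  fixes P :: "'s::finite \<Rightarrow> 'act::{finite,linorder} \<Rightarrow> 's pmf"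
  shows "(\<Sum>z\<in>UNIV. pmf (sample_pmf d P) z * (update_op P d \<alpha> \<gamma> \<pi> ^^ m) (noise_diff P r \<gamma> d QQ z) p) = 0"
proof -
  have "(\<Sum>z\<in>UNIV. pmf (sample_pmf d P) z * (update_op P d \<alpha> \<gamma> \<pi> ^^ m) (noise_diff P r \<gamma> d QQ z) p)
      = (update_op P d \<alpha> \<gamma> \<pi> ^^ m) (\<lambda>q. \<Sum>z\<in>UNIV. pmf (sample_pmf d P) z * noise_diff P r \<gamma> d QQ z q) p"
    by (simp add: update_op_pow_sum update_op_pow_scale)
  also have "\<dots> = 0"
    unfolding expectation_noise_diff using update_op_pow_sum[where A="{}"] by simp
  finally show ?thesis .
qed

section \<open>The error process\<close>

lemma err_UL_Suc:
  fixes P :: "'s::finite \<Rightarrow> 'act::{finite,linorder} \<Rightarrow> 's pmf"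
  shows "err_UL P r \<gamma> d \<alpha> QA0 QB0 E0 (Suc k) \<omega>
    = (\<lambda>p. update_op P d \<alpha> \<gamma> (greedy (Qstar P r \<gamma>)) (err_UL P r \<gamma> d \<alpha> QA0 QB0 E0 k \<omega>) p
        + \<alpha> * noise_diff P r \<gamma> d (sdq_of_list \<alpha> \<gamma> r QA0 QB0 (stake k \<omega>)) (\<omega> !! k) p)"
  by (rule ext) (auto simp: Let_def update_op_def noise_diff_def sdq_eq_sdq_of_list algebra_simps)

lemma err_UL_eq_sum:
  fixes P :: "'s::finite \<Rightarrow> 'act::{finite,linorder} \<Rightarrow> 's pmf"
    and r :: "'s \<Rightarrow> 'act \<Rightarrow> 's \<Rightarrow> real" and d :: "('s \<times> 'act) pmf" and \<alpha> \<gamma> :: real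
  defines "T \<equiv> update_op P d \<alpha> \<gamma> (greedy (Qstar P r \<gamma>))"
  shows "err_UL P r \<gamma> d \<alpha> QA0 QB0 E0 k \<omega> = (\<lambda>p. (T ^^ k) E0 p
    + \<alpha> * (\<Sum>i<k. (T ^^ (k - Suc i)) (noise_diff P r \<gamma> d (sdq_of_list \<alpha> \<gamma> r QA0 QB0 (stake i \<omega>)) (\<omega> !! i)) p))"
proof (induction k)
  case (Suc k)
  define N where "N i = noise_diff P r \<gamma> d (sdq_of_list \<alpha> \<gamma> r QA0 QB0 (stake i \<omega>)) (\<omega> !! i)" for i
  have shift: "T ((T ^^ (k - Suc i)) (N i)) p = (T ^^ (Suc k - Suc i)) (N i) p" if "i < k" for i p
  proof -
    from that have "Suc k - Suc i = Suc (k - Suc i)" by simp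
    then show ?thesis by simp
  qed
  have "T (\<lambda>q. (T ^^ k) E0 q + \<alpha> * (\<Sum>i<k. (T ^^ (k - Suc i)) (N i) q)) p
      = T ((T ^^ k) E0) p + \<alpha> * (\<Sum>i<k. T ((T ^^ (k - Suc i)) (N i)) p)" for p
    unfolding T_def by (simp only: update_op_add update_op_scale update_op_sum)
  then show ?case
    unfolding err_UL_Suc Suc.IH T_def[symmetric] N_def[symmetric]
    by (simp add: shift algebra_simps)
qed (simp add: T_def)

lemma integral_l2norm_err_UL:
  fixes P :: "'s::finite \<Rightarrow> 'act::{finite,linorder} \<Rightarrow> 's pmf"
    and r :: "'s \<Rightarrow> 'act \<Rightarrow> 's \<Rightarrow> real" and d :: "('s \<times> 'act) pmf" and \<alpha> \<gamma> :: real
  defines "T \<equiv> update_op P d \<alpha> \<gamma> (greedy (Qstar P r \<gamma>))"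
  shows "(\<integral>\<omega>. l2norm (err_UL P r \<gamma> d \<alpha> QA0 QB0 E0 k \<omega>) \<partial>stream_space (measure_pmf (sample_pmf d P)))
    = iid_expectation (sample_pmf d P) k (\<lambda>xs. l2norm (\<lambda>p. (T ^^ k) E0 p
        + \<alpha> * (\<Sum>i<k. (T ^^ (k - Suc i)) (noise_diff P r \<gamma> d (sdq_of_list \<alpha> \<gamma> r QA0 QB0 (take i xs)) (xs ! i)) p)))"
proof -
  define F where "F xs = l2norm (\<lambda>p. (T ^^ k) E0 p
      + \<alpha> * (\<Sum>i<k. (T ^^ (k - Suc i)) (noise_diff P r \<gamma> d (sdq_of_list \<alpha> \<gamma> r QA0 QB0 (take i xs)) (xs ! i)) p))"
    for xs
  have "l2norm (err_UL P r \<gamma> d \<alpha> QA0 QB0 E0 k \<omega>) = F (stake k \<omega>)" for \<omega>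
    unfolding err_UL_eq_sum F_def T_def by (simp add: take_stake min_def)
  then have "(\<integral>\<omega>. l2norm (err_UL P r \<gamma> d \<alpha> QA0 QB0 E0 k \<omega>) \<partial>stream_space (measure_pmf (sample_pmf d P)))
      = (\<integral>\<omega>. F (stake k \<omega>) \<partial>stream_space (measure_pmf (sample_pmf d P)))"
    by simp
  also have "\<dots> = iid_expectation (sample_pmf d P) k F"
    by (rule integral_stream_space_stake) (simp add: F_def l2norm_nonneg)
  finally show ?thesis unfolding F_def .
qed

lemma sum_power2_diff_le: "0 \<le> x \<Longrightarrow> x < 1 \<Longrightarrow> (\<Sum>i<k. (x\<^sup>2) ^ (k - Suc i)) \<le> 1 / (1 - x)"
  for x :: real
proof -
  assume x: "0 \<le> x" "x < 1"
  then have "x\<^sup>2 \<le> x" by (simp add: power2_eq_square mult_left_le_one_le)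
  then have "(\<Sum>i<k. (x\<^sup>2) ^ (k - Suc i)) \<le> (\<Sum>i<k. x ^ (k - Suc i))"
    using x by (intro sum_mono power_mono) simp_all
  also have "\<dots> = (1 - x ^ k) / (1 - x)"
    using x by (simp add: sum.nat_diff_reindex sum_gp_strict)
  also have "\<dots> \<le> 1 / (1 - x)"
    using x by (intro divide_right_mono) simp_all
  finally show ?thesis .
qed

lemma rate_bounds:
  assumes "0 \<le> \<gamma>" "\<gamma> < 1" "0 < \<alpha>" "\<alpha> \<le> 1" "0 < dm" "dm \<le> pmf d q"
  shows "0 < \<alpha> * dm * (1 - \<gamma>)" "\<alpha> * dm * (1 - \<gamma>) \<le> 1"
proof -
  have "dm \<le> 1" using assms(6) pmf_le_1[of d q] by linarith
  then have "\<alpha> * dm * (1 - \<gamma>) \<le> 1 * 1 * 1" using assms(1-5) by (intro mult_mono) auto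
  then show "\<alpha> * dm * (1 - \<gamma>) \<le> 1" by simp
  show "0 < \<alpha> * dm * (1 - \<gamma>)" using assms(2,3,5) by simp
qed

lemma second_moment_noise_sum_le:
  fixes P :: "'s::finite \<Rightarrow> 'act::{finite,linorder} \<Rightarrow> 's pmf"
    and r :: "'s \<Rightarrow> 'act \<Rightarrow> 's \<Rightarrow> real" and d :: "('s \<times> 'act) pmf" and \<alpha> \<gamma> dm B :: real
  defines "T \<equiv> update_op P d \<alpha> \<gamma> (greedy (Qstar P r \<gamma>))"
  assumes \<gamma>: "0 \<le> \<gamma>" "\<gamma> < 1" and \<alpha>: "0 < \<alpha>" "\<alpha> \<le> 1" and dm: "0 < dm" "\<And>q. dm \<le> pmf d q"
    and bounded: "\<And>ys q. \<bar>fst (sdq_of_list \<alpha> \<gamma> r QA0 QB0 ys) q\<bar> \<le> B"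
      "\<And>ys q. \<bar>snd (sdq_of_list \<alpha> \<gamma> r QA0 QB0 ys) q\<bar> \<le> B"
  shows "iid_expectation (sample_pmf d P) k (\<lambda>xs. (l2norm (\<lambda>p. \<Sum>i<k.
      (T ^^ (k - Suc i)) (noise_diff P r \<gamma> d (sdq_of_list \<alpha> \<gamma> r QA0 QB0 (take i xs)) (xs ! i)) p))\<^sup>2)
    \<le> CARD('s \<times> 'act) * (4 * B)\<^sup>2 / (\<alpha> * dm * (1 - \<gamma>))"
proof -
  define M where "M = sample_pmf d P"
  define \<rho> where "\<rho> = 1 - \<alpha> * dm * (1 - \<gamma>)"
  define N where "N ys = noise_diff P r \<gamma> d (sdq_of_list \<alpha> \<gamma> r QA0 QB0 ys)" for ys
  define g where "g p i ys = (T ^^ (k - Suc i)) (N (take i ys) (ys ! i)) p" for p i ys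
  have \<rho>: "0 \<le> \<rho>" "\<rho> < 1"
    unfolding \<rho>_def using rate_bounds[OF \<gamma> \<alpha> dm(1) dm(2)[of undefined]] by auto
  have centred: "(\<Sum>z\<in>UNIV. pmf M z * g p i (ys @ [z])) = 0" if "length ys = i" for p i ys
    using that expectation_update_op_pow_noise_diff unfolding g_def M_def N_def T_def
    by (simp add: nth_append)
  have increment_le: "iid_expectation M k (\<lambda>xs. (g p i (take (Suc i) xs))\<^sup>2) \<le> (\<rho>\<^sup>2) ^ (k - Suc i) * (4 * B)\<^sup>2"
    if "i < k" for p i
  proof (rule iid_expectation_prefix_le[OF that])
    fix ys :: "('s \<times> 'act \<times> 's) list"
    assume "length ys = i"
    then have "(\<Sum>z\<in>UNIV. pmf M z * (g p i (ys @ [z]))\<^sup>2)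
        \<le> (\<Sum>z\<in>UNIV. pmf M z * ((\<rho>\<^sup>2) ^ (k - Suc i) * (l2norm (N ys z))\<^sup>2))"
      unfolding g_def T_def \<rho>_def using \<gamma> \<alpha> dm
      by (intro sum_mono mult_left_mono) (simp_all add: nth_append power2_update_op_pow_le)
    also have "\<dots> = (\<rho>\<^sup>2) ^ (k - Suc i) * (\<Sum>z\<in>UNIV. pmf M z * (l2norm (N ys z))\<^sup>2)"
      by (simp add: sum_distrib_left mult.left_commute)
    also have "\<dots> \<le> (\<rho>\<^sup>2) ^ (k - Suc i) * (4 * B)\<^sup>2"
      using second_moment_noise_diff_le[where QA="fst (sdq_of_list \<alpha> \<gamma> r QA0 QB0 ys)"
          and QB="snd (sdq_of_list \<alpha> \<gamma> r QA0 QB0 ys)"] \<gamma> bounded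
      unfolding M_def N_def by (intro mult_left_mono) simp_all
    finally show "(\<Sum>z\<in>UNIV. pmf M z * (g p i (ys @ [z]))\<^sup>2) \<le> (\<rho>\<^sup>2) ^ (k - Suc i) * (4 * B)\<^sup>2" .
  qed
  have "iid_expectation M k (\<lambda>xs. (l2norm (\<lambda>p. \<Sum>i<k. (T ^^ (k - Suc i)) (N (take i xs) (xs ! i)) p))\<^sup>2)
      = (\<Sum>p\<in>UNIV. iid_expectation M k (\<lambda>xs. (\<Sum>i<k. g p i (take (Suc i) xs))\<^sup>2))"
    unfolding power2_l2norm g_def
    by (subst iid_expectation_sum[symmetric]) (auto intro!: iid_expectation_cong sum.cong simp: min_def nth_take)
  also have "\<dots> = (\<Sum>p\<in>UNIV. \<Sum>i<k. iid_expectation M k (\<lambda>xs. (g p i (take (Suc i) xs))\<^sup>2))"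
    using centred by (simp add: iid_expectation_square_sum_martingale)
  also have "\<dots> \<le> (\<Sum>p\<in>(UNIV :: ('s \<times> 'act) set). \<Sum>i<k. (\<rho>\<^sup>2) ^ (k - Suc i) * (4 * B)\<^sup>2)"
    using increment_le by (intro sum_mono) auto
  also have "\<dots> = CARD('s \<times> 'act) * ((\<Sum>i<k. (\<rho>\<^sup>2) ^ (k - Suc i)) * (4 * B)\<^sup>2)"
    by (simp add: sum_distrib_right)
  also have "\<dots> \<le> CARD('s \<times> 'act) * (1 / (1 - \<rho>) * (4 * B)\<^sup>2)"
    using sum_power2_diff_le[OF \<rho>] by (intro mult_left_mono mult_right_mono) simp_all
  finally show ?thesis by (simp add: M_def N_def \<rho>_def)
qed

lemma sqrt_card_le_card: "sqrt (real CARD('a::finite)) \<le> real CARD('a)"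
proof -
  have "1 \<le> real CARD('a)" unfolding one_of_nat_le_iff by (simp add: Suc_le_eq)
  then have "sqrt (real CARD('a)) * 1 \<le> sqrt (real CARD('a)) * sqrt (real CARD('a))"
    by (intro mult_left_mono) auto
  then show ?thesis by simp
qed

lemma scaled_sqrt_bound_eq:
  fixes \<alpha> dm c n :: real
  assumes "0 < \<alpha>" "0 < dm" "0 < c" "0 \<le> n"
  shows "\<alpha> * sqrt (n * (4 * (1 / c))\<^sup>2 / (\<alpha> * dm * c)) = 4 * sqrt \<alpha> * sqrt n / (sqrt dm * c powr (3/2))"
proof -
  define z where "z = 4 * sqrt n / (sqrt \<alpha> * sqrt dm * (c * sqrt c))"
  have "n * (4 * (1 / c))\<^sup>2 / (\<alpha> * dm * c) = z\<^sup>2"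
    unfolding z_def using assms by (simp add: power_divide power_mult_distrib field_simps)
  then have "\<alpha> * sqrt (n * (4 * (1 / c))\<^sup>2 / (\<alpha> * dm * c)) = \<alpha> * z"
    unfolding z_def using assms by simp
  also have "\<dots> = 4 * sqrt \<alpha> * sqrt n / (sqrt dm * (c * sqrt c))"
  proof -
    have "\<alpha> = sqrt \<alpha> * sqrt \<alpha>" using assms(1) by simp
    then show ?thesis unfolding z_def using assms by (simp add: field_simps)
  qed
  also have "c * sqrt c = c powr (3/2)"
    using assms(3) by (simp add: powr_half_sqrt[symmetric] powr_mult_base)
  finally show ?thesis .
qed

lemma expected_l2norm_err_UL_le:
  fixes P :: "'s::finite \<Rightarrow> 'act::{finite,linorder} \<Rightarrow> 's pmf"
    and r :: "'s \<Rightarrow> 'act \<Rightarrow> 's \<Rightarrow> real" and d :: "('s \<times> 'act) pmf" and \<alpha> \<gamma> dm :: real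
  defines "T \<equiv> update_op P d \<alpha> \<gamma> (greedy (Qstar P r \<gamma>))"
  assumes \<gamma>: "0 \<le> \<gamma>" "\<gamma> < 1" and \<alpha>: "0 < \<alpha>" "\<alpha> \<le> 1" and dm: "0 < dm" "\<And>q. dm \<le> pmf d q"
    and rew: "\<And>s a s'. \<bar>r s a s'\<bar> \<le> 1"
    and QA0: "\<And>q. \<bar>QA0 q\<bar> \<le> 1 / (1 - \<gamma>)" and QB0: "\<And>q. \<bar>QB0 q\<bar> \<le> 1 / (1 - \<gamma>)"
  shows "(\<integral>\<omega>. l2norm (err_UL P r \<gamma> d \<alpha> QA0 QB0 E0 k \<omega>) \<partial>stream_space (measure_pmf (sample_pmf d P)))
    \<le> l2norm ((T ^^ k) E0) + 4 * sqrt \<alpha> * sqrt CARD('s \<times> 'act) / (sqrt dm * (1 - \<gamma>) powr (3/2))"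
proof -
  define M where "M = sample_pmf d P"
  define n where "n = real CARD('s \<times> 'act)"
  define W where "W xs = (\<lambda>p. \<Sum>i<k.
      (T ^^ (k - Suc i)) (noise_diff P r \<gamma> d (sdq_of_list \<alpha> \<gamma> r QA0 QB0 (take i xs)) (xs ! i)) p)" for xs
  have "1 + \<gamma> * (1 / (1 - \<gamma>)) = 1 / (1 - \<gamma>)" using \<gamma> by (simp add: field_simps)
  then have bounded: "\<bar>fst (sdq_of_list \<alpha> \<gamma> r QA0 QB0 ys) q\<bar> \<le> 1 / (1 - \<gamma>)"
    "\<bar>snd (sdq_of_list \<alpha> \<gamma> r QA0 QB0 ys) q\<bar> \<le> 1 / (1 - \<gamma>)" for ys q
    using sdq_of_list_bounded[where B="1 / (1 - \<gamma>)" and ys=ys and q=q] QA0 QB0 rew \<gamma> \<alpha> by auto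
  have "(\<integral>\<omega>. l2norm (err_UL P r \<gamma> d \<alpha> QA0 QB0 E0 k \<omega>) \<partial>stream_space (measure_pmf M))
      = iid_expectation M k (\<lambda>xs. l2norm (\<lambda>p. (T ^^ k) E0 p + \<alpha> * W xs p))"
    unfolding M_def W_def T_def by (rule integral_l2norm_err_UL)
  also have "\<dots> \<le> iid_expectation M k (\<lambda>xs. l2norm ((T ^^ k) E0) + \<alpha> * l2norm (W xs))"
    using \<alpha> by (intro iid_expectation_mono l2norm_add_scale_le) simp
  also have "\<dots> = l2norm ((T ^^ k) E0) + \<alpha> * iid_expectation M k (\<lambda>xs. l2norm (W xs))"
    by (simp add: iid_expectation_add iid_expectation_scale iid_expectation_const)
  also have "\<dots> \<le> l2norm ((T ^^ k) E0) + \<alpha> * sqrt (iid_expectation M k (\<lambda>xs. (l2norm (W xs))\<^sup>2))"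
    using \<alpha> by (simp add: iid_expectation_le_sqrt_square)
  also have "\<dots> \<le> l2norm ((T ^^ k) E0) + \<alpha> * sqrt (n * (4 * (1 / (1 - \<gamma>)))\<^sup>2 / (\<alpha> * dm * (1 - \<gamma>)))"
    using second_moment_noise_sum_le[OF \<gamma> \<alpha> dm bounded] \<alpha>
    unfolding M_def W_def n_def T_def by simp
  also have "\<alpha> * sqrt (n * (4 * (1 / (1 - \<gamma>)))\<^sup>2 / (\<alpha> * dm * (1 - \<gamma>)))
      = 4 * sqrt \<alpha> * sqrt n / (sqrt dm * (1 - \<gamma>) powr (3/2))"
    using \<alpha> dm \<gamma> by (intro scaled_sqrt_bound_eq) (simp_all add: n_def)
  finally show ?thesis unfolding M_def n_def .
qed

theorem lemma7:
  fixes P :: "'s::finite \<Rightarrow> 'act::{finite,linorder} \<Rightarrow> 's pmf"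
    and r :: "'s \<Rightarrow> 'act \<Rightarrow> 's \<Rightarrow> real"
    and d :: "('s \<times> 'act) pmf"
    and \<gamma> \<alpha> :: real
    and QA0 QB0 E0 :: "('s, 'act) qfun"
    and k :: nat
  assumes ergodic: "ergodic P"
    and gamma: "0 < \<gamma>" "\<gamma> < 1"
    and alpha: "0 < \<alpha>" "\<alpha> < 1"
    and rew: "\<And>s a s'. \<bar>r s a s'\<bar> \<le> 1"
    and dpos: "\<And>sa. pmf d sa > 0"
    and QA0: "\<And>sa. \<bar>QA0 sa\<bar> \<le> 1"
    and QB0: "\<And>sa. \<bar>QB0 sa\<bar> \<le> 1"
  shows "(let dmin = Min (range (pmf d));
              \<rho> = 1 - \<alpha> * dmin * (1 - \<gamma>);
              n = real CARD('s \<times> 'act)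
          in integral\<^sup>L (stream_space (measure_pmf (sample_pmf d P)))
               (\<lambda>\<omega>. l2norm (err_UL P r \<gamma> d \<alpha> QA0 QB0 E0 k \<omega>))
             \<le> 4 * sqrt \<alpha> * n / (sqrt dmin * (1 - \<gamma>) powr (3/2))
               + n * l2norm E0 * \<rho> ^ k)"
proof -
  define dmin where "dmin = Min (range (pmf d))"
  define \<rho> where "\<rho> = 1 - \<alpha> * dmin * (1 - \<gamma>)"
  define n where "n = real CARD('s \<times> 'act)"
  define T where "T = update_op P d \<alpha> \<gamma> (greedy (Qstar P r \<gamma>))"
  have dmin: "0 < dmin" "\<And>q. dmin \<le> pmf d q"
    using dpos Min_in[of "range (pmf d)"] by (auto simp: dmin_def)
  have "0 \<le> \<rho>"
    using rate_bounds[OF less_imp_le[OF gamma(1)] gamma(2) alpha(1) less_imp_le[OF alpha(2)] dmin(1) dmin(2)]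
    by (simp add: \<rho>_def)
  have sqrt_n: "sqrt n \<le> n" unfolding n_def by (rule sqrt_card_le_card)
  have "1 \<le> 1 / (1 - \<gamma>)" using gamma by simp
  then have "\<bar>QA0 q\<bar> \<le> 1 / (1 - \<gamma>)" "\<bar>QB0 q\<bar> \<le> 1 / (1 - \<gamma>)" for q
    using QA0[of q] QB0[of q] by linarith+
  then have "(\<integral>\<omega>. l2norm (err_UL P r \<gamma> d \<alpha> QA0 QB0 E0 k \<omega>) \<partial>stream_space (measure_pmf (sample_pmf d P)))
      \<le> l2norm ((T ^^ k) E0) + 4 * sqrt \<alpha> * sqrt n / (sqrt dmin * (1 - \<gamma>) powr (3/2))"
    unfolding T_def n_def using gamma alpha dmin rew by (intro expected_l2norm_err_UL_le) auto
  moreover have "4 * sqrt \<alpha> * sqrt n / (sqrt dmin * (1 - \<gamma>) powr (3/2))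
      \<le> 4 * sqrt \<alpha> * n / (sqrt dmin * (1 - \<gamma>) powr (3/2))"
    using sqrt_n alpha dmin by (intro divide_right_mono mult_left_mono) simp_all
  moreover have "l2norm ((T ^^ k) E0) \<le> sqrt n * (\<rho> ^ k * l2norm E0)"
    unfolding T_def n_def \<rho>_def using gamma alpha dmin by (intro l2norm_update_op_pow_le) auto
  moreover have "sqrt n * (\<rho> ^ k * l2norm E0) \<le> n * l2norm E0 * \<rho> ^ k"
    using mult_right_mono[OF sqrt_n, of "\<rho> ^ k * l2norm E0"] \<open>0 \<le> \<rho>\<close> by (simp add: l2norm_nonneg mult_ac)
  ultimately show ?thesis
    unfolding Let_def dmin_def[symmetric] \<rho>_def[symmetric] n_def[symmetric] by linarith
qed

end
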